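(* Let $N,M,m\in\mathbb{N}$ with $M\geq 3$, and let $p_1,\ldots,p_m\in[1,\infty]$. Let $A$ be a nonempty subset of $\{1,\ldots,m\}$ such that $p_j=\infty$ for every $j\in A$. Then for every $m$-linear form $T:\ell_{p_1}^N\times\cdots\times\ell_{p_m}^N\to\mathbb{C}$, $$\|T\|_{A,M}\leq\|T\|\leq r_M^{-|A|}\|T\|_{A,M},$$ where $|A|$ is the cardinality of $A$.
   Context: $\ell_p^N$ denotes $\mathbb{C}^N$ with the $\ell_p$ norm (sup norm if $p=\infty$), with closed unit ball $B_{\ell_p^N}$. $\|T\|=\sup\{|T(x^{(1)},\ldots,x^{(m)})|: x^{(i)}\in B_{\ell_{p_i}^N}, 1\le i\le m\}$. $T_M=\{\exp(2j\pi i/M): j=0,\ldots,M-1\}$ is the set of $M$th roots of unity and $T_M^N=T_M\times\cdots\times T_M\subset\mathbb{C}^N$. $\|T\|_{A,M}:=\sup\{|T(x^{(1)},\ldots,x^{(m)})|: x^{(i)}\in B_{\ell_{p_i}^N}\text{ for } i\notin A,\ x^{(j)}\in T_M^N \text{ for } j\in A\}$. $r_M=\left(\frac12+\frac12\cos\left(\frac{2\pi}{M}\right)\right)^{1/2}$. *)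

theory Defs
  imports "HOL-Analysis.Analysis" "HOL-Library.Extended_Real"
begin

text \<open>Vectors of C^N are modelled as functions nat => complex vanishing at indices >= N
  (coordinates 0..N-1). An m-tuple of vectors is a function nat => (nat => complex) whose
  entries at indices >= m are zero (arguments 0..m-1).\<close>

definition cvecs :: "nat \<Rightarrow> (nat \<Rightarrow> complex) set" where
  "cvecs N = {x. \<forall>k\<ge>N. x k = 0}"

definition tuples :: "nat \<Rightarrow> nat \<Rightarrow> (nat \<Rightarrow> nat \<Rightarrow> complex) set" where
  "tuples m N = {xs. (\<forall>i<m. xs i \<in> cvecs N) \<and> (\<forall>i\<ge>m. xs i = (\<lambda>_. 0))}"

definition lp_norm :: "ereal \<Rightarrow> nat \<Rightarrow> (nat \<Rightarrow> complex) \<Rightarrow> real" where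
  "lp_norm p N x = (if p = \<infinity> then Max (insert 0 ((\<lambda>k. cmod (x k)) ` {..<N}))
     else (\<Sum>k<N. cmod (x k) powr real_of_ereal p) powr (1 / real_of_ereal p))"

definition multilinear_form :: "nat \<Rightarrow> nat \<Rightarrow> ((nat \<Rightarrow> nat \<Rightarrow> complex) \<Rightarrow> complex) \<Rightarrow> bool" where
  "multilinear_form m N T \<longleftrightarrow>
     (\<forall>xs\<in>tuples m N. \<forall>i<m. \<forall>y\<in>cvecs N. \<forall>z\<in>cvecs N. \<forall>c::complex.
        T (xs(i := (\<lambda>k. y k + c * z k))) = T (xs(i := y)) + c * T (xs(i := z)))"

definition form_norm :: "nat \<Rightarrow> nat \<Rightarrow> (nat \<Rightarrow> ereal) \<Rightarrow> ((nat \<Rightarrow> nat \<Rightarrow> complex) \<Rightarrow> complex) \<Rightarrow> real" where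
  "form_norm m N p T = Sup {cmod (T xs) | xs. xs \<in> tuples m N \<and> (\<forall>i<m. lp_norm (p i) N (xs i) \<le> 1)}"

definition roots_unity :: "nat \<Rightarrow> complex set" where
  "roots_unity M = {exp (2 * of_nat j * complex_of_real pi * \<i> / of_nat M) | j. j < M}"

definition form_norm_AM :: "nat \<Rightarrow> nat \<Rightarrow> (nat \<Rightarrow> ereal) \<Rightarrow> nat set \<Rightarrow> nat \<Rightarrow>
    ((nat \<Rightarrow> nat \<Rightarrow> complex) \<Rightarrow> complex) \<Rightarrow> real" where
  "form_norm_AM m N p A M T = Sup {cmod (T xs) | xs. xs \<in> tuples m N \<and>
      (\<forall>i<m. i \<notin> A \<longrightarrow> lp_norm (p i) N (xs i) \<le> 1) \<and>
      (\<forall>j\<in>A. \<forall>k<N. xs j k \<in> roots_unity M)}"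

definition r_const :: "nat \<Rightarrow> real" where
  "r_const M = sqrt (1/2 + 1/2 * cos (2 * pi / real M))"

end

theory Submission
  imports Defs
begin

(* Put r = cos (pi / M), which equals r_M. The lower bound holds because T_M^N lies in the unit
   ball of l_infinity^N. For the upper bound, expanding T in one argument along the standard basis
   gives |T(..., x, ...)| <= sum_k |T(..., e_k, ...)| whenever all |x_k| <= 1. Since every angle
   lies within pi / M of a multiple of 2 pi / M, each complex number a can be turned by an M-th root
   of unity w into one with Re (a w) >= r |a|; choosing such roots coordinatewise yields w in T_M^N
   with |T(..., w, ...)| >= r sum_k |T(..., e_k, ...)|. Replacing the arguments in A one at a time
   costs a factor r each. *)

lemma cis_in_roots_unity:
  assumes "j < M" shows "cis (2 * pi * real j / real M) \<in> roots_unity M"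
proof -
  have "cis (2 * pi * real j / real M) = exp (2 * of_nat j * complex_of_real pi * \<i> / of_nat M)"
    unfolding cis_conv_exp by (simp add: field_simps)
  then show ?thesis unfolding roots_unity_def using assms by blast
qed

lemma norm_roots_unity: "w \<in> roots_unity M \<Longrightarrow> cmod w = 1"
  unfolding roots_unity_def by auto

lemma roots_unity_finite: "finite (roots_unity M)"
proof -
  have "roots_unity M = (\<lambda>j. exp (2 * of_nat j * complex_of_real pi * \<i> / of_nat M)) ` {..<M}"
    unfolding roots_unity_def by blast
  then show ?thesis by simp
qed

lemma cis_int_multiple_in_roots_unity:
  assumes "M > 0" shows "cis (2 * pi * real_of_int k / real M) \<in> roots_unity M"
proof -
  define j where "j = nat (k mod int M)"
  define q where "q = k div int M"
  have "j < M" unfolding j_def using assms by (simp add: nat_less_iff)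
  have "k = int j + int M * q" unfolding j_def q_def using assms by simp
  then have "real_of_int k = real j + real M * real_of_int q"
    by simp
  then have "2 * pi * real_of_int k / real M = 2 * pi * real j / real M + 2 * pi * real_of_int q"
    using assms by (simp add: field_simps)
  then have "cis (2 * pi * real_of_int k / real M) = cis (2 * pi * real j / real M)"
    by (simp add: cis_mult[symmetric])
  then show ?thesis using cis_in_roots_unity[OF \<open>j < M\<close>] by simp
qed

lemma exists_root_unity_Re_ge:
  assumes "M > 0"
  shows "\<exists>w\<in>roots_unity M. cos (pi / real M) * cmod a \<le> Re (a * w)"
proof -
  define t where "t = - Arg a * real M / (2 * pi)"
  define k where "k = round t"
  define \<phi> where "\<phi> = Arg a + 2 * pi * real_of_int k / real M"
  have "\<phi> = (2 * pi / real M) * (real_of_int k - t)"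
    unfolding \<phi>_def t_def using assms by (simp add: field_simps)
  then have "\<bar>\<phi>\<bar> = (2 * pi / real M) * \<bar>real_of_int k - t\<bar>"
    by (simp add: abs_mult)
  also have "\<dots> \<le> (2 * pi / real M) * (1 / 2)"
    unfolding k_def by (intro mult_left_mono of_int_round_abs_le) simp
  finally have "\<bar>\<phi>\<bar> \<le> pi / real M"
    by simp
  moreover have "pi / real M \<le> pi"
    using assms by (simp add: divide_le_eq)
  ultimately have "cos (pi / real M) \<le> cos \<phi>"
    using cos_mono_le_eq[of "pi / real M" "\<bar>\<phi>\<bar>"] by simp
  define w where "w = cis (2 * pi * real_of_int k / real M)"
  have "a * w = rcis (cmod a) (Arg a) * w"
    by (simp only: rcis_cmod_Arg)
  also have "\<dots> = rcis (cmod a) \<phi>"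
    unfolding \<phi>_def w_def by (simp add: rcis_def cis_mult mult.assoc)
  finally have "Re (a * w) = cmod a * cos \<phi>"
    by simp
  moreover have "cmod a * cos (pi / real M) \<le> cmod a * cos \<phi>"
    using \<open>cos (pi / real M) \<le> cos \<phi>\<close> by (simp add: mult_left_mono)
  moreover have "w \<in> roots_unity M"
    unfolding w_def by (rule cis_int_multiple_in_roots_unity[OF assms])
  ultimately show ?thesis by (metis mult.commute)
qed

lemma cos_pi_div_nonneg: assumes "M \<ge> 2" shows "cos (pi / real M) \<ge> 0"
proof -
  have "0 < pi / real M" "pi / real M \<le> pi / 2"
    using assms by (auto simp: field_simps)
  then show ?thesis by (intro cos_ge_zero) auto
qed

lemma r_const_eq_cos: assumes "M \<ge> 2" shows "r_const M = cos (pi / real M)"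
proof -
  have "1/2 + 1/2 * cos (2 * pi / real M) = (cos (pi / real M))\<^sup>2"
    using cos_double_cos[of "pi / real M"] by (simp add: field_simps)
  then show ?thesis unfolding r_const_def using cos_pi_div_nonneg[OF assms] by simp
qed

lemma cos_pi_div_pos: assumes "M \<ge> 3" shows "cos (pi / real M) > 0"
proof -
  have "0 < pi / real M" "pi / real M < pi / 2"
    using assms by (auto simp: field_simps)
  then show ?thesis by (intro cos_gt_zero_pi) auto
qed

definition unit_coord :: "nat \<Rightarrow> nat \<Rightarrow> complex" where
  "unit_coord k = (\<lambda>l. if l = k then 1 else 0)"

lemma unit_coord_in_cvecs: "k < N \<Longrightarrow> unit_coord k \<in> cvecs N"
  unfolding unit_coord_def cvecs_def by auto

lemma fun_upd_in_tuples:
  "xs \<in> tuples m N \<Longrightarrow> i < m \<Longrightarrow> x \<in> cvecs N \<Longrightarrow> xs(i := x) \<in> tuples m N"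
  unfolding tuples_def by auto

lemma multilinear_formD:
  assumes "multilinear_form m N T" "xs \<in> tuples m N" "i < m" "y \<in> cvecs N" "z \<in> cvecs N"
  shows "T (xs(i := (\<lambda>k. y k + c * z k))) = T (xs(i := y)) + c * T (xs(i := z))"
  using assms unfolding multilinear_form_def by blast

lemma multilinear_form_zero_slot:
  assumes T: "multilinear_form m N T" and xs: "xs \<in> tuples m N" and i: "i < m"
  shows "T (xs(i := (\<lambda>_. 0))) = 0"
proof -
  have "(\<lambda>_. 0) \<in> cvecs N" unfolding cvecs_def by simp
  from multilinear_formD[OF T xs i this this, of 1] show ?thesis by simp
qed

lemma multilinear_form_expand_slot:
  assumes T: "multilinear_form m N T" and xs: "xs \<in> tuples m N" and i: "i < m"
    and x: "x \<in> cvecs N"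
  shows "T (xs(i := x)) = (\<Sum>k<N. x k * T (xs(i := unit_coord k)))"
proof -
  have "T (xs(i := x)) = (\<Sum>k<n. x k * T (xs(i := unit_coord k)))"
    if "n \<le> N" "x \<in> cvecs n" for n x
    using that
  proof (induction n arbitrary: x)
    case 0
    then have "x = (\<lambda>_. 0)" unfolding cvecs_def by auto
    then show ?case using multilinear_form_zero_slot[OF T xs i] by (simp del: fun_upd_apply)
  next
    case (Suc n)
    define x' where "x' = x(n := 0)"
    have "x' \<in> cvecs n" "x' \<in> cvecs N"
      using Suc.prems unfolding x'_def cvecs_def by auto
    have x_split: "(\<lambda>k. x' k + x n * unit_coord n k) = x"
      unfolding x'_def unit_coord_def by auto
    have "T (xs(i := x)) = T (xs(i := x')) + x n * T (xs(i := unit_coord n))"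
      using multilinear_formD[OF T xs i \<open>x' \<in> cvecs N\<close> unit_coord_in_cvecs, of n "x n"]
        Suc.prems(1)
      unfolding x_split by simp
    also have "T (xs(i := x')) = (\<Sum>k<n. x' k * T (xs(i := unit_coord k)))"
      using Suc.IH[OF Suc_leD[OF Suc.prems(1)] \<open>x' \<in> cvecs n\<close>] .
    also have "\<dots> = (\<Sum>k<n. x k * T (xs(i := unit_coord k)))"
      unfolding x'_def by (intro sum.cong) auto
    finally show ?case by (simp del: fun_upd_apply)
  qed
  then show ?thesis using x by blast
qed

lemma multilinear_form_slot_le_sum:
  assumes T: "multilinear_form m N T" and xs: "xs \<in> tuples m N" and i: "i < m"
    and x_le: "\<forall>k<N. cmod (xs i k) \<le> 1"
  shows "cmod (T xs) \<le> (\<Sum>k<N. cmod (T (xs(i := unit_coord k))))"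
proof -
  have "xs i \<in> cvecs N" using xs i unfolding tuples_def by auto
  have "T xs = T (xs(i := xs i))" by simp
  also have "\<dots> = (\<Sum>k<N. xs i k * T (xs(i := unit_coord k)))"
    by (rule multilinear_form_expand_slot[OF T xs i \<open>xs i \<in> cvecs N\<close>])
  finally have "cmod (T xs) \<le> (\<Sum>k<N. cmod (xs i k) * cmod (T (xs(i := unit_coord k))))"
    by (simp add: order_trans[OF norm_sum] norm_mult)
  also have "\<dots> \<le> (\<Sum>k<N. cmod (T (xs(i := unit_coord k))))"
    using x_le by (intro sum_mono) (simp add: mult_left_le_one_le)
  finally show ?thesis .
qed

lemma norm_coord_le_1_if_lp_norm_le_1:
  assumes p: "1 \<le> p" and x: "lp_norm p N x \<le> 1" and k: "k < N"
  shows "cmod (x k) \<le> 1"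
proof (cases "p = \<infinity>")
  case True
  have "cmod (x k) \<le> Max (insert 0 ((\<lambda>k. cmod (x k)) ` {..<N}))"
    using k by (intro Max_ge) auto
  then show ?thesis using x True k unfolding lp_norm_def by simp
next
  case False
  define q where "q = real_of_ereal p"
  have q: "q \<ge> 1" using p False unfolding q_def by (cases p) auto
  define s where "s = (\<Sum>k<N. cmod (x k) powr q)"
  have "s powr (1 / q) \<le> 1" using x False unfolding lp_norm_def s_def q_def by simp
  then have "s \<le> 1" using q gr_one_powr[of s "1 / q"] by fastforce
  moreover have "cmod (x k) powr q \<le> s" unfolding s_def using k by (intro member_le_sum) auto
  ultimately have "cmod (x k) powr q \<le> 1" by simp
  then show ?thesis using q gr_one_powr[of "cmod (x k)" q] by fastforce
qed

lemma lp_norm_infinity_le_1: "\<forall>k<N. cmod (x k) \<le> 1 \<Longrightarrow> lp_norm \<infinity> N x \<le> 1"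
  unfolding lp_norm_def by (auto intro!: Max.boundedI)

lemma lp_norm_zero [simp]: "lp_norm p N (\<lambda>_. 0) = 0"
  unfolding lp_norm_def by (auto simp: image_constant_conv)

lemma zero_in_tuples: "(\<lambda>_ _. 0) \<in> tuples m N"
  unfolding tuples_def cvecs_def by simp

lemma multilinear_form_rotate_slot:
  assumes T: "multilinear_form m N T" and M: "M \<ge> 2" and xs: "xs \<in> tuples m N" and i: "i < m"
    and x_le: "\<forall>k<N. cmod (xs i k) \<le> 1"
  shows "\<exists>y\<in>cvecs N. (\<forall>k<N. y k \<in> roots_unity M)
    \<and> cos (pi / real M) * cmod (T xs) \<le> cmod (T (xs(i := y)))"
proof -
  define c where "c = cos (pi / real M)"
  define a where "a k = T (xs(i := unit_coord k))" for k
  have "\<forall>k. \<exists>w. w \<in> roots_unity M \<and> c * cmod (a k) \<le> Re (a k * w)"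
    using exists_root_unity_Re_ge[of M] M unfolding c_def by (simp only: Bex_def) simp
  from choice[OF this] obtain w
    where w: "\<And>k. w k \<in> roots_unity M" "\<And>k. c * cmod (a k) \<le> Re (a k * w k)"
    by blast
  define y where "y k = (if k < N then w k else 0)" for k
  have y: "y \<in> cvecs N" unfolding y_def cvecs_def by simp
  have "c * cmod (T xs) \<le> c * (\<Sum>k<N. cmod (a k))"
    using multilinear_form_slot_le_sum[OF T xs i x_le] cos_pi_div_nonneg[OF M]
    unfolding a_def c_def by (intro mult_left_mono)
  also have "\<dots> \<le> (\<Sum>k<N. Re (a k * w k))"
    unfolding sum_distrib_left using w(2) by (intro sum_mono)
  also have "\<dots> = Re (\<Sum>k<N. y k * a k)"
    unfolding y_def by (simp add: mult.commute)
  also have "\<dots> = Re (T (xs(i := y)))"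
    using multilinear_form_expand_slot[OF T xs i y] unfolding a_def by simp
  also have "\<dots> \<le> cmod (T (xs(i := y)))"
    by (rule complex_Re_le_cmod)
  finally have "c * cmod (T xs) \<le> cmod (T (xs(i := y)))" .
  moreover have "\<forall>k<N. y k \<in> roots_unity M" using w(1) unfolding y_def by simp
  ultimately show ?thesis using y unfolding c_def by blast
qed

lemma multilinear_form_rotate_slots:
  assumes T: "multilinear_form m N T" and M: "M \<ge> 2" and "finite B" and xs: "xs \<in> tuples m N"
    and "B \<subseteq> {..<m}" and "\<forall>j\<in>B. \<forall>k<N. cmod (xs j k) \<le> 1"
  shows "\<exists>ys\<in>tuples m N. (\<forall>i. i \<notin> B \<longrightarrow> ys i = xs i) \<and> (\<forall>j\<in>B. \<forall>k<N. ys j k \<in> roots_unity M)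
    \<and> cos (pi / real M) ^ card B * cmod (T xs) \<le> cmod (T ys)"
  using \<open>finite B\<close> assms(5,6)
proof (induction B rule: finite_induct)
  case empty
  then show ?case using xs by auto
next
  case (insert b B)
  define c where "c = cos (pi / real M)"
  obtain ys where ys: "ys \<in> tuples m N" "\<forall>i. i \<notin> B \<longrightarrow> ys i = xs i"
      "\<forall>j\<in>B. \<forall>k<N. ys j k \<in> roots_unity M" "c ^ card B * cmod (T xs) \<le> cmod (T ys)"
    using insert.IH insert.prems unfolding c_def by auto
  have "ys b = xs b" using ys(2) insert.hyps(2) by simp
  then obtain y where y: "y \<in> cvecs N" "\<forall>k<N. y k \<in> roots_unity M"
      "c * cmod (T ys) \<le> cmod (T (ys(b := y)))"
    using multilinear_form_rotate_slot[OF T M ys(1), of b] insert.prems unfolding c_def by auto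
  have "c ^ card (insert b B) * cmod (T xs) = c * (c ^ card B * cmod (T xs))"
    using insert.hyps by simp
  also have "\<dots> \<le> c * cmod (T ys)"
    using ys(4) cos_pi_div_nonneg[OF M] unfolding c_def by (intro mult_left_mono)
  also have "\<dots> \<le> cmod (T (ys(b := y)))"
    by (rule y(3))
  finally have "c ^ card (insert b B) * cmod (T xs) \<le> cmod (T (ys(b := y)))" .
  then show ?case
  proof (intro bexI conjI)
    show "\<forall>i. i \<notin> insert b B \<longrightarrow> (ys(b := y)) i = xs i" using ys(2) by simp
    show "\<forall>j\<in>insert b B. \<forall>k<N. (ys(b := y)) j k \<in> roots_unity M" using ys(3) y(2) by simp
    show "ys(b := y) \<in> tuples m N" using fun_upd_in_tuples[OF ys(1) _ y(1)] insert.prems by simp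
  qed (simp only: c_def)
qed

lemma multilinear_form_bounded_on_cube:
  assumes T: "multilinear_form m N T"
  shows "\<exists>C. \<forall>xs\<in>tuples m N. (\<forall>i<m. \<forall>k<N. cmod (xs i k) \<le> 1) \<longrightarrow> cmod (T xs) \<le> C"
proof -
  \<comment> \<open>Rotating all m arguments into cube roots of unity loses at most cos (pi / 3) ^ m = 2 ^ -m,
    and only finitely many tuples have all entries among the cube roots of unity.\<close>
  define V where "V = {x. \<forall>k. (k \<in> {..<N} \<longrightarrow> x k \<in> roots_unity 3) \<and> (k \<notin> {..<N} \<longrightarrow> x k = 0)}"
  define R where "R = {ys. \<forall>i. (i \<in> {..<m} \<longrightarrow> ys i \<in> V) \<and> (i \<notin> {..<m} \<longrightarrow> ys i = (\<lambda>_. 0))}"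
  have "finite V" unfolding V_def by (intro finite_set_of_finite_funs roots_unity_finite) simp
  then have "finite R" unfolding R_def by (intro finite_set_of_finite_funs) simp
  define C where "C = 2 ^ m * Max (insert 0 ((\<lambda>ys. cmod (T ys)) ` R))"
  have "cmod (T xs) \<le> C"
    if xs: "xs \<in> tuples m N" and cube: "\<forall>i<m. \<forall>k<N. cmod (xs i k) \<le> 1" for xs
  proof -
    obtain ys where ys: "ys \<in> tuples m N" "\<forall>j<m. \<forall>k<N. ys j k \<in> roots_unity 3"
        "cos (pi / 3) ^ m * cmod (T xs) \<le> cmod (T ys)"
      using multilinear_form_rotate_slots[OF T _ _ xs, of 3 "{..<m}"] cube by auto
    have "ys \<in> R" using ys(1,2) unfolding R_def V_def tuples_def cvecs_def by auto
    then have "cmod (T ys) \<le> Max (insert 0 ((\<lambda>ys. cmod (T ys)) ` R))"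
      using \<open>finite R\<close> by (intro Max_ge) auto
    then have "2 ^ m * cmod (T ys) \<le> C" unfolding C_def by simp
    moreover have "cmod (T xs) \<le> 2 ^ m * cmod (T ys)"
      using ys(3) unfolding cos_60 by (simp add: field_simps)
    ultimately show ?thesis by linarith
  qed
  then show ?thesis by blast
qed

definition unit_ball_values ::
    "nat \<Rightarrow> nat \<Rightarrow> (nat \<Rightarrow> ereal) \<Rightarrow> ((nat \<Rightarrow> nat \<Rightarrow> complex) \<Rightarrow> complex) \<Rightarrow> real set" where
  "unit_ball_values m N p T =
     {cmod (T xs) | xs. xs \<in> tuples m N \<and> (\<forall>i<m. lp_norm (p i) N (xs i) \<le> 1)}"

definition roots_values :: "nat \<Rightarrow> nat \<Rightarrow> (nat \<Rightarrow> ereal) \<Rightarrow> nat set \<Rightarrow> nat \<Rightarrow>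
    ((nat \<Rightarrow> nat \<Rightarrow> complex) \<Rightarrow> complex) \<Rightarrow> real set" where
  "roots_values m N p A M T =
     {cmod (T xs) | xs. xs \<in> tuples m N \<and> (\<forall>i<m. i \<notin> A \<longrightarrow> lp_norm (p i) N (xs i) \<le> 1)
        \<and> (\<forall>j\<in>A. \<forall>k<N. xs j k \<in> roots_unity M)}"

lemma form_norm_eq_Sup: "form_norm m N p T = Sup (unit_ball_values m N p T)"
  unfolding form_norm_def unit_ball_values_def ..

lemma form_norm_AM_eq_Sup: "form_norm_AM m N p A M T = Sup (roots_values m N p A M T)"
  unfolding form_norm_AM_def roots_values_def ..

lemma bdd_above_unit_ball_values:
  assumes T: "multilinear_form m N T" and p: "\<forall>i<m. 1 \<le> p i"
  shows "bdd_above (unit_ball_values m N p T)"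
proof -
  obtain C where C: "\<forall>xs\<in>tuples m N. (\<forall>i<m. \<forall>k<N. cmod (xs i k) \<le> 1) \<longrightarrow> cmod (T xs) \<le> C"
    using multilinear_form_bounded_on_cube[OF T] by blast
  have "cmod (T xs) \<le> C"
    if xs: "xs \<in> tuples m N" "\<forall>i<m. lp_norm (p i) N (xs i) \<le> 1" for xs
    using C xs p norm_coord_le_1_if_lp_norm_le_1 by blast
  then show ?thesis unfolding unit_ball_values_def by (intro bdd_aboveI[of _ C]) blast
qed

lemma bdd_above_roots_values:
  assumes T: "multilinear_form m N T" and p: "\<forall>i<m. 1 \<le> p i"
  shows "bdd_above (roots_values m N p A M T)"
proof -
  obtain C where C: "\<forall>xs\<in>tuples m N. (\<forall>i<m. \<forall>k<N. cmod (xs i k) \<le> 1) \<longrightarrow> cmod (T xs) \<le> C"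
    using multilinear_form_bounded_on_cube[OF T] by blast
  have "cmod (T xs) \<le> C"
    if xs: "xs \<in> tuples m N" and lp: "\<forall>i<m. i \<notin> A \<longrightarrow> lp_norm (p i) N (xs i) \<le> 1"
      and roots: "\<forall>j\<in>A. \<forall>k<N. xs j k \<in> roots_unity M" for xs
  proof -
    have "cmod (xs i k) \<le> 1" if "i < m" "k < N" for i k
    proof (cases "i \<in> A")
      case True
      then show ?thesis using roots \<open>k < N\<close> by (simp add: norm_roots_unity[of _ M])
    next
      case False
      then show ?thesis
        using norm_coord_le_1_if_lp_norm_le_1[of "p i" N "xs i" k] lp p that by simp
    qed
    then show ?thesis using C xs by blast
  qed
  then show ?thesis unfolding roots_values_def by (intro bdd_aboveI[of _ C]) blast
qed

lemma exists_roots_value_ge: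
  assumes T: "multilinear_form m N T" and M: "M \<ge> 2" and A: "A \<subseteq> {..<m}"
    and p: "\<forall>i<m. 1 \<le> p i"
    and xs: "xs \<in> tuples m N" "\<forall>i<m. lp_norm (p i) N (xs i) \<le> 1"
  shows "\<exists>v\<in>roots_values m N p A M T. cos (pi / real M) ^ card A * cmod (T xs) \<le> v"
proof -
  have "finite A" using A finite_subset by blast
  moreover have "\<forall>j\<in>A. \<forall>k<N. cmod (xs j k) \<le> 1"
    using A p xs(2) norm_coord_le_1_if_lp_norm_le_1 by blast
  ultimately obtain ys where ys: "ys \<in> tuples m N" "\<forall>i. i \<notin> A \<longrightarrow> ys i = xs i"
      "\<forall>j\<in>A. \<forall>k<N. ys j k \<in> roots_unity M" "cos (pi / real M) ^ card A * cmod (T xs) \<le> cmod (T ys)"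
    using multilinear_form_rotate_slots[OF T M _ xs(1) A] by blast
  have "cmod (T ys) \<in> roots_values m N p A M T"
    unfolding roots_values_def using ys(1-3) xs(2) by auto
  then show ?thesis using ys(4) by blast
qed

lemma form_norm_AM_le_form_norm:
  assumes T: "multilinear_form m N T" and M: "M \<ge> 2" and A: "A \<subseteq> {..<m}"
    and p: "\<forall>i<m. 1 \<le> p i" and p_A: "\<forall>j\<in>A. p j = \<infinity>"
  shows "form_norm_AM m N p A M T \<le> form_norm m N p T"
proof -
  have "roots_values m N p A M T \<subseteq> unit_ball_values m N p T"
  proof
    fix v assume "v \<in> roots_values m N p A M T"
    then obtain xs where v: "v = cmod (T xs)" "xs \<in> tuples m N"
        "\<forall>i<m. i \<notin> A \<longrightarrow> lp_norm (p i) N (xs i) \<le> 1" "\<forall>j\<in>A. \<forall>k<N. xs j k \<in> roots_unity M"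
      unfolding roots_values_def by blast
    have "lp_norm (p i) N (xs i) \<le> 1" if "i < m" for i
    proof (cases "i \<in> A")
      case True
      then have "\<forall>k<N. cmod (xs i k) \<le> 1" using v(4) by (simp add: norm_roots_unity[of _ M])
      then show ?thesis using p_A True lp_norm_infinity_le_1 by simp
    next
      case False
      then show ?thesis using v(3) that by simp
    qed
    then show "v \<in> unit_ball_values m N p T" unfolding unit_ball_values_def using v(1,2) by blast
  qed
  moreover have "roots_values m N p A M T \<noteq> {}"
    using exists_roots_value_ge[OF T M A p zero_in_tuples] by auto
  ultimately show ?thesis unfolding form_norm_eq_Sup form_norm_AM_eq_Sup
    using bdd_above_unit_ball_values[OF T p] by (intro cSup_subset_mono)
qed

lemma form_norm_le_form_norm_AM:
  assumes T: "multilinear_form m N T" and M: "M \<ge> 3" and A: "A \<subseteq> {..<m}"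
    and p: "\<forall>i<m. 1 \<le> p i"
  shows "form_norm m N p T \<le> form_norm_AM m N p A M T / cos (pi / real M) ^ card A"
  unfolding form_norm_eq_Sup
proof (rule cSup_least)
  show "unit_ball_values m N p T \<noteq> {}"
    unfolding unit_ball_values_def using zero_in_tuples by force
next
  fix v assume "v \<in> unit_ball_values m N p T"
  then obtain xs where v: "v = cmod (T xs)"
    and xs: "xs \<in> tuples m N" "\<forall>i<m. lp_norm (p i) N (xs i) \<le> 1"
    unfolding unit_ball_values_def by blast
  have "M \<ge> 2" using M by simp
  then obtain u where "u \<in> roots_values m N p A M T" "cos (pi / real M) ^ card A * v \<le> u"
    using exists_roots_value_ge[OF T _ A p xs] unfolding v by blast
  then have "cos (pi / real M) ^ card A * v \<le> form_norm_AM m N p A M T"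
    unfolding form_norm_AM_eq_Sup using cSup_upper[OF _ bdd_above_roots_values[OF T p]] by fastforce
  then show "v \<le> form_norm_AM m N p A M T / cos (pi / real M) ^ card A"
    using cos_pi_div_pos[OF M] by (simp add: pos_le_divide_eq mult.commute)
qed

theorem mainTheorem3:
  fixes N M m :: nat and p :: "nat \<Rightarrow> ereal" and A :: "nat set"
    and T :: "(nat \<Rightarrow> nat \<Rightarrow> complex) \<Rightarrow> complex"
  assumes "M \<ge> 3"
    and "\<forall>i<m. 1 \<le> p i"
    and "A \<noteq> {}" and "A \<subseteq> {..<m}"
    and "\<forall>j\<in>A. p j = \<infinity>"
    and "multilinear_form m N T"
  shows "form_norm_AM m N p A M T \<le> form_norm m N p T
       \<and> form_norm m N p T \<le> (1 / r_const M) ^ card A * form_norm_AM m N p A M T"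
proof
  show "form_norm_AM m N p A M T \<le> form_norm m N p T"
    using form_norm_AM_le_form_norm[OF assms(6) _ assms(4,2,5)] assms(1) by simp
  have "r_const M = cos (pi / real M)"
    using assms(1) by (intro r_const_eq_cos) simp
  then show "form_norm m N p T \<le> (1 / r_const M) ^ card A * form_norm_AM m N p A M T"
    using form_norm_le_form_norm_AM[OF assms(6,1,4,2)] by (simp add: power_one_over)
qed

end
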